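(* Let $\Omega$ be a topological signature, $X$ a topological space, and $\mathcal B$ a Boolean subalgebra of $\mathcal P(T_\Omega(X))$ satisfying condition $(\ast)$. For $w\in\Omega_n$ and ultrafilters $U_1,\dots,U_n$ of $\mathcal B$, let $w(U_1,\dots,U_n)$ be the set of all $L\in\mathcal B$ for which there are $L_i\in U_i$ ($i=1,\dots,n$) with $w(L_1,\dots,L_n)\subseteq L$ (here $w(L_1,\dots,L_n)=\{w(t_1,\dots,t_n):t_i\in L_i\}$). Then each $w(U_1,\dots,U_n)$ is an ultrafilter of $\mathcal B$, and the evaluation maps $(w,U_1,\dots,U_n)\mapsto w(U_1,\dots,U_n)$ make the Stone dual space $\mathcal B^\star$ a Stone topological $\Omega$-algebra. Moreover, if every $L\in\mathcal B$ is such that $L\cap X$ is open in $X$, then the map $X\to\mathcal B^\star$, $x\mapsto U_x=\{L\in\mathcal B:x\in L\}$, is a generating mapping.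
   Context: $T_\Omega(X)$ is the term algebra on $X$: finite ordered trees with leaves labeled in $X\uplus\Omega_0$ and nodes with $k$ children labeled in $\Omega_k$, topologized as the topological sum over tree shapes of products of label spaces; $X$ is identified with single-node trees; $E_n:\Omega_n\times T_\Omega(X)^n\to T_\Omega(X)$ is its evaluation map. $\mathcal P(S)$ is the Boolean algebra of all subsets of $S$, and $\mathcal P_{co}(S)$ that of clopen subsets of a space $S$. For a Boolean subalgebra $\mathcal B$ of $\mathcal P(T_\Omega(X))$, let $\mathcal B'_n$ be the Boolean subalgebra of $\mathcal P(\Omega_n\times T_\Omega(X)^n)$ generated by all sets $K\times L_1\times\cdots\times L_n$ with $K$ clopen in $\Omega_n$ and $L_i\in\mathcal B$. Condition $(\ast)$: for every $n$ and every $L\in\mathcal B$, $E_n^{-1}(L)\in\mathcal B'_n$. $\mathcal B^\star$ is the set of ultrafilters of $\mathcal B$ with basic open sets $\{U: L\in U\}$, $L\in\mathcal B$. A Stone topological algebra is a compact Hausdorff 0-dimensional space with continuous evaluation maps $\Omega_n\times A^n\to A$. A generating mapping is a continuous map $X\to A$ whose image generates a dense subalgebra of $A$. *)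

theory Defs
  imports "HOL-Analysis.Analysis"
begin

datatype ('f,'x) otrm = Var 'x | App 'f "('f,'x) otrm list"

text \<open>A topological signature is a family Om :: nat => 'f topology, Om n being the
  space of n-ary symbols.  The term algebra carrier T_Om(X):\<close>
inductive_set terms :: "(nat \<Rightarrow> 'f topology) \<Rightarrow> 'x topology \<Rightarrow> ('f,'x) otrm set"
  for Om X where
  var: "x \<in> topspace X \<Longrightarrow> Var x \<in> terms Om X"
| app: "w \<in> topspace (Om (length ts)) \<Longrightarrow> \<forall>t\<in>set ts. t \<in> terms Om X \<Longrightarrow> App w ts \<in> terms Om X"

definition boolean_subalgebra :: "'a set \<Rightarrow> 'a set set \<Rightarrow> bool" where
  "boolean_subalgebra S B \<longleftrightarrow> B \<subseteq> Pow S \<and> {} \<in> B \<and> S \<in> B \<and>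
     (\<forall>L\<in>B. S - L \<in> B) \<and> (\<forall>L\<in>B. \<forall>M\<in>B. L \<inter> M \<in> B \<and> L \<union> M \<in> B)"

definition boolean_generated :: "'a set \<Rightarrow> 'a set set \<Rightarrow> 'a set set" where
  "boolean_generated S G = \<Inter>{B. boolean_subalgebra S B \<and> G \<subseteq> B}"

text \<open>The space Om_n x T^n, with tuples represented as lists of length n.\<close>
definition op_domain :: "(nat \<Rightarrow> 'f topology) \<Rightarrow> 'x topology \<Rightarrow> nat \<Rightarrow> ('f \<times> ('f,'x) otrm list) set" where
  "op_domain Om X n = {(w, ts). w \<in> topspace (Om n) \<and> length ts = n \<and> set ts \<subseteq> terms Om X}"

definition B_prime :: "(nat \<Rightarrow> 'f topology) \<Rightarrow> 'x topology \<Rightarrow> ('f,'x) otrm set set \<Rightarrow> nat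
    \<Rightarrow> ('f \<times> ('f,'x) otrm list) set set" where
  "B_prime Om X B n = boolean_generated (op_domain Om X n)
     {{(w, ts) \<in> op_domain Om X n. w \<in> K \<and> (\<forall>i<n. ts ! i \<in> Ls ! i)} | K Ls.
        closedin (Om n) K \<and> openin (Om n) K \<and> length Ls = n \<and> set Ls \<subseteq> B}"

text \<open>Condition (*): E_n^{-1}(L) belongs to B'_n.\<close>
definition cond_star :: "(nat \<Rightarrow> 'f topology) \<Rightarrow> 'x topology \<Rightarrow> ('f,'x) otrm set set \<Rightarrow> bool" where
  "cond_star Om X B \<longleftrightarrow> (\<forall>n. \<forall>L\<in>B.
     {(w, ts) \<in> op_domain Om X n. App w ts \<in> L} \<in> B_prime Om X B n)"

definition ultrafilter_of :: "'a set \<Rightarrow> 'a set set \<Rightarrow> 'a set set \<Rightarrow> bool" where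
  "ultrafilter_of S B U \<longleftrightarrow> U \<subseteq> B \<and> S \<in> U \<and> {} \<notin> U \<and>
     (\<forall>L\<in>U. \<forall>M\<in>B. L \<subseteq> M \<longrightarrow> M \<in> U) \<and>
     (\<forall>L\<in>U. \<forall>M\<in>U. L \<inter> M \<in> U) \<and>
     (\<forall>L\<in>B. L \<in> U \<or> S - L \<in> U)"

definition stone_dual :: "'a set \<Rightarrow> 'a set set \<Rightarrow> 'a set set topology" where
  "stone_dual S B = topology_generated_by
     {{U. ultrafilter_of S B U \<and> L \<in> U} | L. L \<in> B}"

definition ult_eval :: "('f,'x) otrm set set \<Rightarrow> 'f \<Rightarrow> ('f,'x) otrm set set list \<Rightarrow> ('f,'x) otrm set set" where
  "ult_eval B w Us = {L \<in> B. \<exists>Ls. length Ls = length Us \<and> (\<forall>i<length Us. Ls ! i \<in> Us ! i) \<and>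
      {App w ts | ts. length ts = length Us \<and> (\<forall>i<length Us. ts ! i \<in> Ls ! i)} \<subseteq> L}"

text \<open>Stone topological Om-algebra with carrier topspace A and evaluation ev;
  A^n is the product topology over the index set {..<n}.\<close>
definition stone_top_algebra :: "(nat \<Rightarrow> 'f topology) \<Rightarrow> 'a topology \<Rightarrow> ('f \<Rightarrow> 'a list \<Rightarrow> 'a) \<Rightarrow> bool" where
  "stone_top_algebra Om A ev \<longleftrightarrow> compact_space A \<and> Hausdorff_space A \<and> A dim_le 0 \<and>
     (\<forall>n. continuous_map (prod_topology (Om n) (product_topology (\<lambda>_. A) {..<n})) A
            (\<lambda>(w, f). ev w (map f [0..<n])))"

inductive_set gen_subalg :: "(nat \<Rightarrow> 'f topology) \<Rightarrow> ('f \<Rightarrow> 'a list \<Rightarrow> 'a) \<Rightarrow> 'a set \<Rightarrow> 'a set"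
  for Om ev G where
  base: "a \<in> G \<Longrightarrow> a \<in> gen_subalg Om ev G"
| op: "w \<in> topspace (Om (length as)) \<Longrightarrow> \<forall>a\<in>set as. a \<in> gen_subalg Om ev G \<Longrightarrow> ev w as \<in> gen_subalg Om ev G"

definition generating_map :: "(nat \<Rightarrow> 'f topology) \<Rightarrow> 'x topology \<Rightarrow> 'a topology \<Rightarrow> ('f \<Rightarrow> 'a list \<Rightarrow> 'a)
    \<Rightarrow> ('x \<Rightarrow> 'a) \<Rightarrow> bool" where
  "generating_map Om X A ev g \<longleftrightarrow> continuous_map X A g \<and>
     A closure_of (gen_subalg Om ev (g ` topspace X)) = topspace A"

end

(* The Stone space of any Boolean algebra of sets is compact, Hausdorff and zero-dimensional.
   For w in Omega_n and ultrafilters U_1, ..., U_n of B, call a subset of Omega_n x T^n a box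
   neighbourhood of (w, U_1, ..., U_n) if it contains a box K x L_1 x ... x L_n with K clopen,
   w in K and L_i in U_i. These sets form a filter, and the sets it decides (it contains them or
   their complements) form a Boolean algebra containing all boxes, hence all of B'_n. Condition
   cond_star pulls this back along E_n: L belongs to w(U_1, ..., U_n) iff E_n^-1(L) is a box
   neighbourhood. This makes w(U_1, ..., U_n) an ultrafilter, and makes evaluation continuous,
   since the box K x L_1 x ... x L_n is itself an open neighbourhood in Omega_n x (B^star)^n.
   Finally, the principal ultrafilters U_t are dense and satisfy
   w(U_t1, ..., U_tn) = U_w(t1, ..., tn), so they all lie in the subalgebra generated by the U_x. *)

theory Submission
  imports Defs
begin

lemma boolean_generated_least:
  "boolean_subalgebra S C \<Longrightarrow> G \<subseteq> C \<Longrightarrow> boolean_generated S G \<subseteq> C"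
  unfolding boolean_generated_def by blast

lemma boolean_subalgebra_decided:
  assumes "P D"
    and mono: "\<And>Y Z. P Y \<Longrightarrow> Y \<subseteq> Z \<Longrightarrow> P Z"
    and Int: "\<And>Y Z. P Y \<Longrightarrow> P Z \<Longrightarrow> P (Y \<inter> Z)"
  shows "boolean_subalgebra D {Y. Y \<subseteq> D \<and> (P Y \<or> P (D - Y))}" (is "boolean_subalgebra D ?C")
proof -
  have Diff: "D - Y \<in> ?C" if "Y \<in> ?C" for Y
    using that by (auto simp: double_diff)
  have Un: "Y \<union> Z \<in> ?C" if "Y \<in> ?C" "Z \<in> ?C" for Y Z
  proof -
    have "P (D - Y) \<Longrightarrow> P (D - Z) \<Longrightarrow> P (D - (Y \<union> Z))"
      using Int[of "D - Y" "D - Z"] by (simp add: Diff_Un)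
    then show ?thesis using that mono[of Y "Y \<union> Z"] mono[of Z "Y \<union> Z"] by blast
  qed
  have "Y \<inter> Z \<in> ?C" if "Y \<in> ?C" "Z \<in> ?C" for Y Z
  proof -
    have "Y \<inter> Z = D - ((D - Y) \<union> (D - Z))" using that by blast
    then show ?thesis using Diff[OF Un[OF Diff[OF that(1)] Diff[OF that(2)]]] by simp
  qed
  moreover have "D \<in> ?C" using \<open>P D\<close> by blast
  ultimately show ?thesis
    unfolding boolean_subalgebra_def using Diff Un Diff[of D] by auto
qed

lemma ultrafilter_of_mem_B: "ultrafilter_of S B U \<Longrightarrow> L \<in> U \<Longrightarrow> L \<in> B"
  by (auto simp: ultrafilter_of_def)

lemma ultrafilter_of_top: "ultrafilter_of S B U \<Longrightarrow> S \<in> U"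
  by (simp add: ultrafilter_of_def)

lemma ultrafilter_of_nonempty: "ultrafilter_of S B U \<Longrightarrow> L \<in> U \<Longrightarrow> L \<noteq> {}"
  by (auto simp: ultrafilter_of_def)

lemma ultrafilter_of_mono: "ultrafilter_of S B U \<Longrightarrow> L \<in> U \<Longrightarrow> M \<in> B \<Longrightarrow> L \<subseteq> M \<Longrightarrow> M \<in> U"
  unfolding ultrafilter_of_def by (elim conjE) blast

lemma ultrafilter_of_Int: "ultrafilter_of S B U \<Longrightarrow> L \<in> U \<Longrightarrow> M \<in> U \<Longrightarrow> L \<inter> M \<in> U"
  unfolding ultrafilter_of_def by (elim conjE) blast

lemma ultrafilter_of_Diff_iff:
  assumes "ultrafilter_of S B U" "L \<in> B"
  shows "S - L \<in> U \<longleftrightarrow> L \<notin> U"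
proof
  assume "S - L \<in> U"
  then show "L \<notin> U"
    using ultrafilter_of_Int[OF assms(1), of L "S - L"] ultrafilter_of_nonempty[OF assms(1)] by auto
qed (use assms in \<open>auto simp: ultrafilter_of_def\<close>)

lemma ultrafilter_of_subset_imp_eq:
  assumes U: "ultrafilter_of S B U" and V: "ultrafilter_of S B V" and "U \<subseteq> V"
  shows "U = V"
proof (rule ccontr)
  assume "U \<noteq> V"
  then obtain L where "L \<in> V" "L \<notin> U" using \<open>U \<subseteq> V\<close> by blast
  moreover have "L \<in> B" using ultrafilter_of_mem_B[OF V \<open>L \<in> V\<close>] .
  ultimately show False
    using \<open>U \<subseteq> V\<close> ultrafilter_of_Diff_iff[OF U] ultrafilter_of_Diff_iff[OF V] by blast
qed

lemma ultrafilter_of_finite_Inter: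
  assumes U: "ultrafilter_of S B U"
  shows "finite F \<Longrightarrow> F \<subseteq> U \<Longrightarrow> S \<inter> \<Inter>F \<in> U"
proof (induction F rule: finite_induct)
  case empty
  then show ?case using ultrafilter_of_top[OF U] by simp
next
  case (insert L F)
  then have "L \<inter> (S \<inter> \<Inter>F) \<in> U" using ultrafilter_of_Int[OF U] by simp
  then show ?case by (simp add: Int_left_commute)
qed

definition finite_intersection_property :: "'a set \<Rightarrow> 'a set set \<Rightarrow> bool" where
  "finite_intersection_property S F \<longleftrightarrow> (\<forall>F'. finite F' \<and> F' \<subseteq> F \<longrightarrow> S \<inter> \<Inter>F' \<noteq> {})"

definition stone_basic :: "'a set \<Rightarrow> 'a set set \<Rightarrow> 'a set \<Rightarrow> 'a set set set" where
  "stone_basic S B L = {U. ultrafilter_of S B U \<and> L \<in> U}"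

lemma stone_dual_alt_def: "stone_dual S B = topology_generated_by (stone_basic S B ` B)"
  unfolding stone_dual_def stone_basic_def by (simp add: Setcompr_eq_image)

lemma topspace_stone_dual: "topspace (stone_dual S B) = {U. ultrafilter_of S B U}"
  unfolding stone_dual_alt_def stone_basic_def
  using ultrafilter_of_top ultrafilter_of_mem_B by fastforce

lemma openin_stone_basic: "L \<in> B \<Longrightarrow> openin (stone_dual S B) (stone_basic S B L)"
  unfolding stone_dual_alt_def by (rule topology_generated_by_Basis) blast

lemma stone_basic_Int:
  assumes "L \<in> B" "M \<in> B"
  shows "stone_basic S B (L \<inter> M) = stone_basic S B L \<inter> stone_basic S B M"
proof (intro equalityI subsetI)
  fix U assume "U \<in> stone_basic S B (L \<inter> M)"
  then show "U \<in> stone_basic S B L \<inter> stone_basic S B M"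
    using ultrafilter_of_mono[of S B U "L \<inter> M"] assms unfolding stone_basic_def by blast
next
  fix U assume "U \<in> stone_basic S B L \<inter> stone_basic S B M"
  then show "U \<in> stone_basic S B (L \<inter> M)"
    using ultrafilter_of_Int[of S B U L M] unfolding stone_basic_def by blast
qed

lemma continuous_map_stone_dualI:
  assumes uf: "\<And>x. x \<in> topspace T \<Longrightarrow> ultrafilter_of S B (f x)"
    and open_pre: "\<And>L. L \<in> B \<Longrightarrow> openin T {x \<in> topspace T. L \<in> f x}"
  shows "continuous_map T (stone_dual S B) f"
  unfolding stone_dual_alt_def
proof (rule continuous_on_generated_topo)
  show "f ` topspace T \<subseteq> \<Union>(stone_basic S B ` B)"
    using uf ultrafilter_of_top ultrafilter_of_mem_B unfolding stone_basic_def by fast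
next
  fix V assume "V \<in> stone_basic S B ` B"
  then obtain L where "L \<in> B" "V = stone_basic S B L" by blast
  moreover have "f -` stone_basic S B L \<inter> topspace T = {x \<in> topspace T. L \<in> f x}"
    using uf unfolding stone_basic_def by blast
  ultimately show "openin T (f -` V \<inter> topspace T)" using open_pre by simp
qed

context
  fixes S :: "'a set" and B :: "'a set set"
  assumes BA: "boolean_subalgebra S B"
begin

lemma boolean_subalgebra_subset: "L \<in> B \<Longrightarrow> L \<subseteq> S"
  using BA unfolding boolean_subalgebra_def by blast

lemma boolean_subalgebra_top: "S \<in> B"
  using BA unfolding boolean_subalgebra_def by blast

lemma boolean_subalgebra_Diff: "L \<in> B \<Longrightarrow> S - L \<in> B"
  using BA unfolding boolean_subalgebra_def by blast

lemma boolean_subalgebra_Int: "L \<in> B \<Longrightarrow> M \<in> B \<Longrightarrow> L \<inter> M \<in> B"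
  using BA unfolding boolean_subalgebra_def by blast

lemma ultrafilter_of_principal: "t \<in> S \<Longrightarrow> ultrafilter_of S B {L \<in> B. t \<in> L}"
  unfolding ultrafilter_of_def
  using boolean_subalgebra_top boolean_subalgebra_Diff boolean_subalgebra_Int by auto

lemma ultrafilter_of_maximal_fip:
  assumes "M \<subseteq> B" and fip: "finite_intersection_property S M"
    and maximal: "\<And>N. N \<in> B \<Longrightarrow> finite_intersection_property S (insert N M) \<Longrightarrow> N \<in> M"
  shows "ultrafilter_of S B M"
proof -
  have meets: "S \<inter> \<Inter>F \<noteq> {}" if "finite F" "F \<subseteq> M" for F
    using fip that unfolding finite_intersection_property_def by blast
  have decides: "L \<in> M \<or> S - L \<in> M" if "L \<in> B" for L
  proof (rule ccontr)
    assume "\<not> (L \<in> M \<or> S - L \<in> M)"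
    then have "\<not> finite_intersection_property S (insert L M)"
      "\<not> finite_intersection_property S (insert (S - L) M)"
      using maximal[of L] maximal[of "S - L"] \<open>L \<in> B\<close> boolean_subalgebra_Diff by auto
    then obtain F1 F2 where F1: "finite F1" "F1 \<subseteq> insert L M" "S \<inter> \<Inter>F1 = {}"
      and F2: "finite F2" "F2 \<subseteq> insert (S - L) M" "S \<inter> \<Inter>F2 = {}"
      by (metis finite_intersection_property_def)
    have "finite ((F1 - {L}) \<union> (F2 - {S - L}))" "(F1 - {L}) \<union> (F2 - {S - L}) \<subseteq> M"
      using F1 F2 by auto
    then obtain x where "x \<in> S" "x \<in> \<Inter>((F1 - {L}) \<union> (F2 - {S - L}))"
      using meets by (meson disjoint_iff)
    then have "x \<in> S \<inter> \<Inter>F1 \<or> x \<in> S \<inter> \<Inter>F2"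
      using F1(2) F2(2) by (cases "x \<in> L") auto
    then show False using F1(3) F2(3) by blast
  qed
  have "{} \<notin> M" using meets[of "{{}}"] by auto
  show ?thesis
    unfolding ultrafilter_of_def
  proof (intro conjI ballI impI)
    show "S \<in> M" using decides[OF boolean_subalgebra_top] \<open>{} \<notin> M\<close> by simp
    show "L \<inter> N \<in> M" if "L \<in> M" "N \<in> M" for L N
    proof (rule ccontr)
      assume "L \<inter> N \<notin> M"
      then have "S - (L \<inter> N) \<in> M" using decides boolean_subalgebra_Int that \<open>M \<subseteq> B\<close> by blast
      then show False using meets[of "{L, N, S - (L \<inter> N)}"] that by auto
    qed
    show "N \<in> M" if "L \<in> M" "N \<in> B" "L \<subseteq> N" for L N
    proof (rule ccontr)
      assume "N \<notin> M"
      then have "S - N \<in> M" using decides \<open>N \<in> B\<close> by blast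
      then show False using meets[of "{L, S - N}"] that by auto
    qed
  qed (use \<open>M \<subseteq> B\<close> \<open>{} \<notin> M\<close> decides in auto)
qed

lemma ultrafilter_of_extend:
  assumes "G \<subseteq> B" "finite_intersection_property S G"
  obtains U where "ultrafilter_of S B U" "G \<subseteq> U"
proof -
  define \<A> where "\<A> = {F. G \<subseteq> F \<and> F \<subseteq> B \<and> finite_intersection_property S F}"
  have "\<exists>M\<in>\<A>. \<forall>F\<in>\<A>. M \<subseteq> F \<longrightarrow> F = M"
  proof (rule subset_Zorn_nonempty)
    show "\<A> \<noteq> {}" using assms unfolding \<A>_def by blast
  next
    fix \<C> assume "\<C> \<noteq> {}" and chain: "subset.chain \<A> \<C>"
    then have "\<C> \<subseteq> \<A>" by (simp add: subset_chain_def)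
    have "finite_intersection_property S (\<Union>\<C>)"
      unfolding finite_intersection_property_def
    proof (intro allI impI, elim conjE)
      fix F assume "finite F" "F \<subseteq> \<Union>\<C>"
      then obtain C where "C \<in> \<C>" "F \<subseteq> C"
        using finite_subset_Union_chain[OF _ _ \<open>\<C> \<noteq> {}\<close> chain] by metis
      then show "S \<inter> \<Inter>F \<noteq> {}"
        using \<open>\<C> \<subseteq> \<A>\<close> \<open>finite F\<close> unfolding \<A>_def finite_intersection_property_def by blast
    qed
    then show "\<Union>\<C> \<in> \<A>"
      using \<open>\<C> \<noteq> {}\<close> \<open>\<C> \<subseteq> \<A>\<close> unfolding \<A>_def by blast
  qed
  then obtain M where "M \<in> \<A>" and max: "\<And>F. F \<in> \<A> \<Longrightarrow> M \<subseteq> F \<Longrightarrow> F = M"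
    by blast
  then have "G \<subseteq> M" "M \<subseteq> B" and fip: "finite_intersection_property S M"
    unfolding \<A>_def by auto
  have "ultrafilter_of S B M"
  proof (rule ultrafilter_of_maximal_fip[OF \<open>M \<subseteq> B\<close> fip])
    fix N assume "N \<in> B" "finite_intersection_property S (insert N M)"
    then have "insert N M \<in> \<A>" using \<open>G \<subseteq> M\<close> \<open>M \<subseteq> B\<close> unfolding \<A>_def by blast
    then show "N \<in> M" using max[of "insert N M"] by blast
  qed
  then show thesis using that \<open>G \<subseteq> M\<close> by blast
qed

lemma ultrafilter_of_finite_subcover:
  assumes "C \<subseteq> B" and cover: "\<And>U. ultrafilter_of S B U \<Longrightarrow> \<exists>L\<in>C. L \<in> U"
  obtains C' where "finite C'" "C' \<subseteq> C" "\<And>U. ultrafilter_of S B U \<Longrightarrow> \<exists>L\<in>C'. L \<in> U"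
proof (rule ccontr)
  assume no_finite: "\<not> thesis"
  have fip: "finite_intersection_property S ((-) S ` C)"
    unfolding finite_intersection_property_def
  proof (intro allI impI)
    fix F' assume "finite F' \<and> F' \<subseteq> (-) S ` C"
    then obtain F where F: "F \<subseteq> C" "finite F" "F' = (-) S ` F"
      by (meson finite_subset_image)
    have "\<not> (\<forall>U. ultrafilter_of S B U \<longrightarrow> (\<exists>L\<in>F. L \<in> U))"
      using no_finite that[OF F(2,1)] by blast
    then obtain U where U: "ultrafilter_of S B U" "\<forall>L\<in>F. L \<notin> U"
      by blast
    have "F' \<subseteq> U"
    proof
      fix N assume "N \<in> F'"
      then obtain L where "L \<in> F" "N = S - L" using F(3) by blast
      then show "N \<in> U" using U ultrafilter_of_Diff_iff[OF U(1)] F(1) \<open>C \<subseteq> B\<close> by blast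
    qed
    moreover have "finite F'" using F(2,3) by simp
    ultimately have "S \<inter> \<Inter>F' \<in> U" using ultrafilter_of_finite_Inter[OF U(1)] by blast
    then show "S \<inter> \<Inter>F' \<noteq> {}" using ultrafilter_of_nonempty[OF U(1)] by blast
  qed
  have "(-) S ` C \<subseteq> B" using \<open>C \<subseteq> B\<close> boolean_subalgebra_Diff by blast
  then obtain U where U: "ultrafilter_of S B U" "(-) S ` C \<subseteq> U"
    using ultrafilter_of_extend fip by blast
  then obtain L where "L \<in> C" "L \<in> U" using cover by blast
  then show False
    using U ultrafilter_of_Diff_iff[OF U(1), of L] \<open>C \<subseteq> B\<close> by blast
qed

lemma openin_stone_dual_basic_nhd:
  assumes "openin (stone_dual S B) W" "U \<in> W"
  obtains L where "L \<in> B" "L \<in> U" "stone_basic S B L \<subseteq> W"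
proof -
  have "generate_topology_on (stone_basic S B ` B) W"
    using assms(1) unfolding stone_dual_alt_def by (rule openin_topology_generated_by)
  moreover have "ultrafilter_of S B U"
    using openin_subset[OF assms(1)] assms(2) topspace_stone_dual by blast
  ultimately have "\<exists>L\<in>B. L \<in> U \<and> stone_basic S B L \<subseteq> W"
    using \<open>U \<in> W\<close>
  proof (induction arbitrary: U)
    case (Int W1 W2)
    then obtain L1 L2 where "L1 \<in> B" "L1 \<in> U" "stone_basic S B L1 \<subseteq> W1"
      and "L2 \<in> B" "L2 \<in> U" "stone_basic S B L2 \<subseteq> W2" by blast
    moreover have "L1 \<inter> L2 \<in> U" using ultrafilter_of_Int[OF Int.prems(1)] calculation by blast
    moreover have "stone_basic S B (L1 \<inter> L2) \<subseteq> W1 \<inter> W2"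
      using stone_basic_Int[OF \<open>L1 \<in> B\<close> \<open>L2 \<in> B\<close>] calculation by auto
    ultimately show ?case using boolean_subalgebra_Int[of L1 L2] by auto
  next
    case (UN K)
    then show ?case by blast
  qed (auto simp: stone_basic_def)
  then show thesis using that by blast
qed

lemma closedin_stone_basic:
  assumes "L \<in> B"
  shows "closedin (stone_dual S B) (stone_basic S B L)"
  unfolding closedin_def
proof
  show "stone_basic S B L \<subseteq> topspace (stone_dual S B)"
    unfolding topspace_stone_dual stone_basic_def by blast
  have "topspace (stone_dual S B) - stone_basic S B L = stone_basic S B (S - L)"
    unfolding topspace_stone_dual stone_basic_def
    using ultrafilter_of_Diff_iff[of S B _ L] assms by auto
  then show "openin (stone_dual S B) (topspace (stone_dual S B) - stone_basic S B L)"
    using openin_stone_basic[OF boolean_subalgebra_Diff[OF assms]] by simp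
qed

lemma Hausdorff_stone_dual: "Hausdorff_space (stone_dual S B)"
  unfolding Hausdorff_space_def topspace_stone_dual
proof (intro allI impI, elim CollectE conjE)
  fix U V assume U: "ultrafilter_of S B U" and V: "ultrafilter_of S B V" and "U \<noteq> V"
  then obtain L where "L \<in> U" "L \<notin> V"
    using ultrafilter_of_subset_imp_eq[OF U V] by blast
  moreover have "L \<in> B" using ultrafilter_of_mem_B[OF U \<open>L \<in> U\<close>] .
  ultimately have "U \<in> stone_basic S B L" "V \<in> stone_basic S B (S - L)"
    "disjnt (stone_basic S B L) (stone_basic S B (S - L))"
    using U V ultrafilter_of_Diff_iff[of S B V L] ultrafilter_of_Diff_iff[of S B _ L]
    unfolding stone_basic_def disjnt_def by auto
  then show "\<exists>W1 W2. openin (stone_dual S B) W1 \<and> openin (stone_dual S B) W2 \<and>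
      U \<in> W1 \<and> V \<in> W2 \<and> disjnt W1 W2"
    using openin_stone_basic[OF \<open>L \<in> B\<close>] openin_stone_basic[OF boolean_subalgebra_Diff[OF \<open>L \<in> B\<close>]]
    by blast
qed

lemma stone_dual_dim_le_0: "stone_dual S B dim_le 0"
  unfolding dimension_le_0_neighbourhood_base_of_clopen neighbourhood_base_of
proof (intro allI impI, elim conjE)
  fix W U assume "openin (stone_dual S B) W" "U \<in> W"
  then obtain L where "L \<in> B" "L \<in> U" "stone_basic S B L \<subseteq> W"
    by (rule openin_stone_dual_basic_nhd)
  moreover have "U \<in> stone_basic S B L"
    using \<open>openin (stone_dual S B) W\<close> \<open>U \<in> W\<close> \<open>L \<in> U\<close> openin_subset topspace_stone_dual
    unfolding stone_basic_def by blast
  ultimately show "\<exists>U' V. openin (stone_dual S B) U' \<and>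
      (closedin (stone_dual S B) V \<and> openin (stone_dual S B) V) \<and> U \<in> U' \<and> U' \<subseteq> V \<and> V \<subseteq> W"
    using openin_stone_basic[OF \<open>L \<in> B\<close>] closedin_stone_basic[OF \<open>L \<in> B\<close>] by blast
qed

lemma compact_space_stone_dual: "compact_space (stone_dual S B)"
  unfolding compact_space_alt topspace_stone_dual
proof (intro allI impI, elim conjE)
  fix \<U>
  assume open_cover: "\<forall>W\<in>\<U>. openin (stone_dual S B) W" "{U. ultrafilter_of S B U} \<subseteq> \<Union>\<U>"
  define C where "C = {L \<in> B. \<exists>W\<in>\<U>. stone_basic S B L \<subseteq> W}"
  have "\<exists>L\<in>C. L \<in> U" if U: "ultrafilter_of S B U" for U
  proof -
    obtain W where "W \<in> \<U>" "U \<in> W" using open_cover(2) U by blast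
    moreover obtain L where "L \<in> B" "L \<in> U" "stone_basic S B L \<subseteq> W"
      using open_cover(1) \<open>W \<in> \<U>\<close> \<open>U \<in> W\<close> openin_stone_dual_basic_nhd by blast
    ultimately show ?thesis unfolding C_def by blast
  qed
  then obtain C' where C': "finite C'" "C' \<subseteq> C" "\<And>U. ultrafilter_of S B U \<Longrightarrow> \<exists>L\<in>C'. L \<in> U"
    using ultrafilter_of_finite_subcover[of C] unfolding C_def by blast
  then have "\<forall>L\<in>C'. \<exists>W. W \<in> \<U> \<and> stone_basic S B L \<subseteq> W"
    unfolding C_def by blast
  from bchoice[OF this] obtain f where f: "\<forall>L\<in>C'. f L \<in> \<U> \<and> stone_basic S B L \<subseteq> f L"
    by blast
  show "\<exists>\<F>. finite \<F> \<and> \<F> \<subseteq> \<U> \<and> {U. ultrafilter_of S B U} \<subseteq> \<Union>\<F>"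
  proof (intro exI conjI)
    show "{U. ultrafilter_of S B U} \<subseteq> \<Union>(f ` C')"
      using C'(3) f unfolding stone_basic_def by blast
  qed (use C'(1) f in auto)
qed

lemma closure_of_principal_ultrafilters:
  "stone_dual S B closure_of ((\<lambda>t. {L \<in> B. t \<in> L}) ` S) = topspace (stone_dual S B)"
proof (intro equalityI subsetI)
  fix U assume U: "U \<in> topspace (stone_dual S B)"
  have "\<exists>t\<in>S. {L \<in> B. t \<in> L} \<in> W" if W: "openin (stone_dual S B) W" "U \<in> W" for W
  proof -
    obtain L where "L \<in> B" "L \<in> U" "stone_basic S B L \<subseteq> W"
      using openin_stone_dual_basic_nhd[OF W] by blast
    moreover obtain t where "t \<in> L"
      using ultrafilter_of_nonempty U \<open>L \<in> U\<close> topspace_stone_dual by blast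
    moreover have "t \<in> S" using boolean_subalgebra_subset \<open>L \<in> B\<close> \<open>t \<in> L\<close> by blast
    ultimately show ?thesis
      using ultrafilter_of_principal[OF \<open>t \<in> S\<close>] unfolding stone_basic_def by blast
  qed
  then show "U \<in> stone_dual S B closure_of ((\<lambda>t. {L \<in> B. t \<in> L}) ` S)"
    using U unfolding closure_of_def by blast
qed (rule closure_of_subset_topspace[THEN subsetD])

end

lemma mem_ult_evalI:
  assumes "L \<in> B" "\<forall>i<length Us. Ls i \<in> Us ! i"
    and "\<And>ts. length ts = length Us \<Longrightarrow> \<forall>i<length Us. ts ! i \<in> Ls i \<Longrightarrow> App w ts \<in> L"
  shows "L \<in> ult_eval B w Us"
  unfolding ult_eval_def
  using assms by (intro CollectI conjI exI[of _ "map Ls [0..<length Us]"]) auto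

lemma mem_ult_evalE:
  assumes "L \<in> ult_eval B w Us"
  obtains Ls where "L \<in> B" "\<forall>i<length Us. Ls i \<in> Us ! i"
    "\<And>ts. length ts = length Us \<Longrightarrow> \<forall>i<length Us. ts ! i \<in> Ls i \<Longrightarrow> App w ts \<in> L"
proof -
  obtain Ls where "L \<in> B" "length Ls = length Us" "\<forall>i<length Us. Ls ! i \<in> Us ! i"
    "{App w ts | ts. length ts = length Us \<and> (\<forall>i<length Us. ts ! i \<in> Ls ! i)} \<subseteq> L"
    using assms unfolding ult_eval_def by blast
  then show thesis using that[of "(!) Ls"] by blast
qed

context
  fixes Om :: "nat \<Rightarrow> 'f topology" and X :: "'x topology" and B :: "('f,'x) otrm set set"
  assumes BA: "boolean_subalgebra (terms Om X) B"
begin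

definition box :: "nat \<Rightarrow> 'f set \<Rightarrow> (nat \<Rightarrow> ('f,'x) otrm set) \<Rightarrow> ('f \<times> ('f,'x) otrm list) set" where
  "box n K Ls = {(v, ts) \<in> op_domain Om X n. v \<in> K \<and> (\<forall>i<n. ts ! i \<in> Ls i)}"

definition box_nhd :: "nat \<Rightarrow> 'f \<Rightarrow> ('f,'x) otrm set set list \<Rightarrow> ('f \<times> ('f,'x) otrm list) set \<Rightarrow> bool" where
  "box_nhd n w Us Y \<longleftrightarrow> (\<exists>K Ls. closedin (Om n) K \<and> openin (Om n) K \<and> w \<in> K \<and>
     (\<forall>i<n. Ls i \<in> Us ! i) \<and> box n K Ls \<subseteq> Y)"

definition eval_preimage :: "nat \<Rightarrow> ('f,'x) otrm set \<Rightarrow> ('f \<times> ('f,'x) otrm list) set" where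
  "eval_preimage n L = {(v, ts) \<in> op_domain Om X n. App v ts \<in> L}"

lemma box_nhdI:
  "closedin (Om n) K \<Longrightarrow> openin (Om n) K \<Longrightarrow> w \<in> K \<Longrightarrow> \<forall>i<n. Ls i \<in> Us ! i \<Longrightarrow> box n K Ls \<subseteq> Y
    \<Longrightarrow> box_nhd n w Us Y"
  unfolding box_nhd_def by blast

lemma box_nhd_mono: "box_nhd n w Us Y \<Longrightarrow> Y \<subseteq> Z \<Longrightarrow> box_nhd n w Us Z"
  unfolding box_nhd_def by (meson order_trans)

lemma App_in_terms: "(v, ts) \<in> op_domain Om X n \<Longrightarrow> App v ts \<in> terms Om X"
  unfolding op_domain_def by (auto intro: terms.app)

lemma eval_preimage_terms: "eval_preimage n (terms Om X) = op_domain Om X n"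
  unfolding eval_preimage_def using App_in_terms by blast

lemma eval_preimage_Diff:
  "eval_preimage n (terms Om X - L) = op_domain Om X n - eval_preimage n L"
  unfolding eval_preimage_def using App_in_terms by blast

lemma eval_preimage_in_B_prime: "cond_star Om X B \<Longrightarrow> L \<in> B \<Longrightarrow> eval_preimage n L \<in> B_prime Om X B n"
  unfolding cond_star_def eval_preimage_def by blast

context
  fixes n :: nat and w :: 'f and Us :: "('f,'x) otrm set set list"
  assumes w: "w \<in> topspace (Om n)" and length_Us: "length Us = n"
    and Us: "\<forall>U\<in>set Us. ultrafilter_of (terms Om X) B U"
begin

lemma ultrafilter_of_nth: "i < n \<Longrightarrow> ultrafilter_of (terms Om X) B (Us ! i)"
  using Us length_Us nth_mem by blast

lemma box_nhd_Int:
  assumes "box_nhd n w Us Y" "box_nhd n w Us Z"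
  shows "box_nhd n w Us (Y \<inter> Z)"
proof -
  obtain K1 Ls1 where K1: "closedin (Om n) K1" "openin (Om n) K1" "w \<in> K1"
    and Ls1: "\<forall>i<n. Ls1 i \<in> Us ! i" and Y: "box n K1 Ls1 \<subseteq> Y"
    using assms(1) unfolding box_nhd_def by blast
  obtain K2 Ls2 where K2: "closedin (Om n) K2" "openin (Om n) K2" "w \<in> K2"
    and Ls2: "\<forall>i<n. Ls2 i \<in> Us ! i" and Z: "box n K2 Ls2 \<subseteq> Z"
    using assms(2) unfolding box_nhd_def by blast
  have "\<forall>i<n. Ls1 i \<inter> Ls2 i \<in> Us ! i"
    using Ls1 Ls2 ultrafilter_of_Int[OF ultrafilter_of_nth] by blast
  moreover have "box n (K1 \<inter> K2) (\<lambda>i. Ls1 i \<inter> Ls2 i) \<subseteq> Y \<inter> Z"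
    using Y Z unfolding box_def by auto
  ultimately show ?thesis
    using K1 K2 by (intro box_nhdI) auto
qed

lemma box_nhd_op_domain: "box_nhd n w Us (op_domain Om X n)"
proof (rule box_nhdI)
  show "\<forall>i<n. terms Om X \<in> Us ! i" using ultrafilter_of_top[OF ultrafilter_of_nth] by blast
qed (auto simp: w box_def)

lemma box_nhd_box_or_Diff:
  assumes K: "closedin (Om n) K" "openin (Om n) K" and Ls: "\<forall>i<n. Ls i \<in> B"
  shows "box_nhd n w Us (box n K Ls) \<or> box_nhd n w Us (op_domain Om X n - box n K Ls)"
proof -
  have top: "\<forall>i<n. terms Om X \<in> Us ! i" using ultrafilter_of_top[OF ultrafilter_of_nth] by blast
  consider "w \<in> K" "\<forall>i<n. Ls i \<in> Us ! i" | "w \<notin> K" | j where "j < n" "Ls j \<notin> Us ! j"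
    by blast
  then show ?thesis
  proof cases
    case 1
    then show ?thesis using K by (blast intro: box_nhdI)
  next
    case 2
    have "box n (topspace (Om n) - K) (\<lambda>_. terms Om X) \<subseteq> op_domain Om X n - box n K Ls"
      unfolding box_def by auto
    then have "box_nhd n w Us (op_domain Om X n - box n K Ls)"
      using K w 2 top by (intro box_nhdI) auto
    then show ?thesis ..
  next
    case 3
    define Ls' where "Ls' = (\<lambda>_. terms Om X)(j := terms Om X - Ls j)"
    have "terms Om X - Ls j \<in> Us ! j"
      using 3 Ls ultrafilter_of_Diff_iff[OF ultrafilter_of_nth] by blast
    then have "\<forall>i<n. Ls' i \<in> Us ! i" using top unfolding Ls'_def by simp
    moreover have "box n (topspace (Om n)) Ls' \<subseteq> op_domain Om X n - box n K Ls"
      unfolding box_def Ls'_def using \<open>j < n\<close> by auto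
    ultimately have "box_nhd n w Us (op_domain Om X n - box n K Ls)"
      using w by (intro box_nhdI) auto
    then show ?thesis ..
  qed
qed

lemma box_nhd_B_prime:
  assumes "Y \<in> B_prime Om X B n"
  shows "box_nhd n w Us Y \<or> box_nhd n w Us (op_domain Om X n - Y)"
proof -
  let ?D = "op_domain Om X n"
  have "B_prime Om X B n \<subseteq> {Y. Y \<subseteq> ?D \<and> (box_nhd n w Us Y \<or> box_nhd n w Us (?D - Y))}"
    unfolding B_prime_def
  proof (rule boolean_generated_least)
    show "boolean_subalgebra ?D {Y. Y \<subseteq> ?D \<and> (box_nhd n w Us Y \<or> box_nhd n w Us (?D - Y))}"
      using box_nhd_op_domain box_nhd_mono box_nhd_Int by (rule boolean_subalgebra_decided)
  next
    show "{{(v, ts) \<in> ?D. v \<in> K \<and> (\<forall>i<n. ts ! i \<in> Ls ! i)} | K Ls.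
        closedin (Om n) K \<and> openin (Om n) K \<and> length Ls = n \<and> set Ls \<subseteq> B}
      \<subseteq> {Y. Y \<subseteq> ?D \<and> (box_nhd n w Us Y \<or> box_nhd n w Us (?D - Y))}"
    proof (intro subsetI, elim CollectE exE conjE)
      fix Y K Ls
      assume "Y = {(v, ts) \<in> ?D. v \<in> K \<and> (\<forall>i<n. ts ! i \<in> Ls ! i)}" and K: "closedin (Om n) K"
        "openin (Om n) K" and Ls: "length Ls = n" "set Ls \<subseteq> B"
      then have "Y = box n K ((!) Ls)" unfolding box_def by simp
      moreover have "\<forall>i<n. Ls ! i \<in> B" using Ls nth_mem by blast
      ultimately show "Y \<in> {Y. Y \<subseteq> ?D \<and> (box_nhd n w Us Y \<or> box_nhd n w Us (?D - Y))}"
        using box_nhd_box_or_Diff[OF K] unfolding box_def by auto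
    qed
  qed
  then show ?thesis using assms by blast
qed

lemma ult_eval_if_box_nhd:
  assumes "L \<in> B" "box_nhd n w Us (eval_preimage n L)"
  shows "L \<in> ult_eval B w Us"
proof -
  obtain K Ls where "w \<in> K" and Ls: "\<forall>i<n. Ls i \<in> Us ! i"
    and box: "box n K Ls \<subseteq> eval_preimage n L"
    using assms(2) unfolding box_nhd_def by blast
  have Ls_terms: "Ls i \<subseteq> terms Om X" if "i < n" for i
    using Ls that ultrafilter_of_mem_B[OF ultrafilter_of_nth] boolean_subalgebra_subset[OF BA]
    by blast
  show ?thesis
  proof (rule mem_ult_evalI)
    fix ts assume ts: "length ts = length Us" "\<forall>i<length Us. ts ! i \<in> Ls i"
    then have "set ts \<subseteq> terms Om X"
      using Ls_terms length_Us by (fastforce simp: in_set_conv_nth)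
    then have "(w, ts) \<in> box n K Ls"
      using ts length_Us w \<open>w \<in> K\<close> unfolding box_def op_domain_def by auto
    then show "App w ts \<in> L" using box unfolding eval_preimage_def by blast
  qed (use assms(1) Ls length_Us in auto)
qed

lemma ult_eval_Int:
  assumes "L \<in> ult_eval B w Us" "M \<in> ult_eval B w Us"
  shows "L \<inter> M \<in> ult_eval B w Us"
proof -
  obtain Ls1 where "L \<in> B" and Ls1: "\<forall>i<n. Ls1 i \<in> Us ! i"
    and L: "\<And>ts. length ts = n \<Longrightarrow> \<forall>i<n. ts ! i \<in> Ls1 i \<Longrightarrow> App w ts \<in> L"
    using assms(1) length_Us by (elim mem_ult_evalE) auto
  obtain Ls2 where "M \<in> B" and Ls2: "\<forall>i<n. Ls2 i \<in> Us ! i"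
    and M: "\<And>ts. length ts = n \<Longrightarrow> \<forall>i<n. ts ! i \<in> Ls2 i \<Longrightarrow> App w ts \<in> M"
    using assms(2) length_Us by (elim mem_ult_evalE) auto
  show ?thesis
  proof (rule mem_ult_evalI[where Ls = "\<lambda>i. Ls1 i \<inter> Ls2 i"])
    show "L \<inter> M \<in> B" using \<open>L \<in> B\<close> \<open>M \<in> B\<close> boolean_subalgebra_Int[OF BA] by blast
    show "\<forall>i<length Us. Ls1 i \<inter> Ls2 i \<in> Us ! i"
      using Ls1 Ls2 length_Us ultrafilter_of_Int[OF ultrafilter_of_nth] by auto
  qed (use L M length_Us in auto)
qed

lemma empty_not_in_ult_eval: "{} \<notin> ult_eval B w Us"
proof
  assume "{} \<in> ult_eval B w Us"
  then obtain Ls where Ls: "\<forall>i<n. Ls i \<in> Us ! i"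
    and empty: "\<And>ts. length ts = n \<Longrightarrow> \<forall>i<n. ts ! i \<in> Ls i \<Longrightarrow> App w ts \<in> {}"
    using length_Us by (elim mem_ult_evalE) auto
  have "\<forall>i<n. (SOME t. t \<in> Ls i) \<in> Ls i"
    using Ls ultrafilter_of_nonempty[OF ultrafilter_of_nth] by (metis some_in_eq)
  then show False using empty[of "map (\<lambda>i. SOME t. t \<in> Ls i) [0..<n]"] by simp
qed

lemma box_nhd_eval_preimage_or_Diff:
  assumes "cond_star Om X B" "L \<in> B"
  shows "box_nhd n w Us (eval_preimage n L) \<or> box_nhd n w Us (eval_preimage n (terms Om X - L))"
  using box_nhd_B_prime[OF eval_preimage_in_B_prime[OF assms]] by (simp add: eval_preimage_Diff)

lemma ult_eval_decides:
  assumes "cond_star Om X B" "L \<in> B"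
  shows "L \<in> ult_eval B w Us \<or> terms Om X - L \<in> ult_eval B w Us"
  using box_nhd_eval_preimage_or_Diff[OF assms] assms(2) boolean_subalgebra_Diff[OF BA assms(2)]
  by (blast intro: ult_eval_if_box_nhd)

lemma ultrafilter_of_ult_eval:
  assumes "cond_star Om X B"
  shows "ultrafilter_of (terms Om X) B (ult_eval B w Us)"
  unfolding ultrafilter_of_def
proof (intro conjI ballI impI)
  show "ult_eval B w Us \<subseteq> B" unfolding ult_eval_def by blast
  show "terms Om X \<in> ult_eval B w Us"
    using ult_eval_if_box_nhd[OF boolean_subalgebra_top[OF BA]] box_nhd_op_domain
    by (simp add: eval_preimage_terms)
  show "M \<in> ult_eval B w Us" if "L \<in> ult_eval B w Us" "M \<in> B" "L \<subseteq> M" for L M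
    using that unfolding ult_eval_def by blast
qed (use empty_not_in_ult_eval ult_eval_Int ult_eval_decides[OF assms] in auto)

lemma mem_ult_eval_iff_box_nhd:
  assumes "cond_star Om X B" "L \<in> B"
  shows "L \<in> ult_eval B w Us \<longleftrightarrow> box_nhd n w Us (eval_preimage n L)"
proof
  assume "L \<in> ult_eval B w Us"
  then have "terms Om X - L \<notin> ult_eval B w Us"
    using ultrafilter_of_Diff_iff[OF ultrafilter_of_ult_eval[OF assms(1)] assms(2)] by blast
  then show "box_nhd n w Us (eval_preimage n L)"
    using box_nhd_eval_preimage_or_Diff[OF assms] boolean_subalgebra_Diff[OF BA assms(2)]
    by (blast intro: ult_eval_if_box_nhd)
qed (rule ult_eval_if_box_nhd[OF assms(2)])

end

lemma ult_eval_open_nhd: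
  fixes n :: nat
  defines "P \<equiv> prod_topology (Om n) (product_topology (\<lambda>_. stone_dual (terms Om X) B) {..<n})"
  assumes CS: "cond_star Om X B" and "L \<in> B" and p: "(w, f) \<in> topspace P"
    and "L \<in> ult_eval B w (map f [0..<n])"
  obtains N where "openin P N" "(w, f) \<in> N"
    "\<And>v g. (v, g) \<in> N \<Longrightarrow> L \<in> ult_eval B v (map g [0..<n])"
proof -
  have in_P: "(v, g) \<in> topspace P \<longleftrightarrow> v \<in> topspace (Om n) \<and> g \<in> extensional {..<n} \<and>
      (\<forall>i<n. ultrafilter_of (terms Om X) B (g i))" for v g
    unfolding P_def by (auto simp: topspace_stone_dual PiE_iff)
  have "box_nhd n w (map f [0..<n]) (eval_preimage n L)"
    using mem_ult_eval_iff_box_nhd[OF _ _ _ CS \<open>L \<in> B\<close>] p \<open>L \<in> ult_eval B w (map f [0..<n])\<close>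
    unfolding in_P by auto
  then obtain K Ls where K: "closedin (Om n) K" "openin (Om n) K" "w \<in> K"
    and Ls: "\<forall>i<n. Ls i \<in> f i" and box: "box n K Ls \<subseteq> eval_preimage n L"
    unfolding box_nhd_def by auto
  have Ls_B: "Ls i \<in> B" if "i < n" for i
    using Ls p that ultrafilter_of_mem_B unfolding in_P by blast
  define N where "N = K \<times> (\<Pi>\<^sub>E i\<in>{..<n}. stone_basic (terms Om X) B (Ls i))"
  show thesis
  proof (rule that[of N])
    show "openin P N"
      unfolding P_def N_def openin_prod_Times_iff
      using K Ls_B openin_stone_basic by (auto simp: openin_PiE)
    show "(w, f) \<in> N"
      using p K Ls unfolding N_def in_P by (auto simp: stone_basic_def PiE_iff)
  next
    fix v g assume "(v, g) \<in> N"
    then have v: "v \<in> K" "v \<in> topspace (Om n)"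
      and g: "\<forall>i<n. ultrafilter_of (terms Om X) B (g i) \<and> Ls i \<in> g i"
      using openin_subset[OF K(2)] unfolding N_def stone_basic_def by auto
    then have "box_nhd n v (map g [0..<n]) (eval_preimage n L)"
      using K box by (intro box_nhdI) auto
    then show "L \<in> ult_eval B v (map g [0..<n])"
      using ult_eval_if_box_nhd[OF v(2) _ _ \<open>L \<in> B\<close>] g by auto
  qed
qed

lemma continuous_map_ult_eval:
  assumes "cond_star Om X B"
  shows "continuous_map (prod_topology (Om n) (product_topology (\<lambda>_. stone_dual (terms Om X) B) {..<n}))
     (stone_dual (terms Om X) B) (\<lambda>(w, f). ult_eval B w (map f [0..<n]))"
    (is "continuous_map ?P _ _")
proof (rule continuous_map_stone_dualI)
  fix p assume "p \<in> topspace ?P"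
  then show "ultrafilter_of (terms Om X) B (case p of (w, f) \<Rightarrow> ult_eval B w (map f [0..<n]))"
    using ultrafilter_of_ult_eval[OF _ _ _ assms]
    by (auto simp: topspace_stone_dual PiE_iff)
next
  fix L assume "L \<in> B"
  show "openin ?P {p \<in> topspace ?P. L \<in> (case p of (w, f) \<Rightarrow> ult_eval B w (map f [0..<n]))}"
  proof (subst openin_subopen, intro ballI, elim CollectE conjE)
    fix p assume p: "p \<in> topspace ?P" "L \<in> (case p of (w, f) \<Rightarrow> ult_eval B w (map f [0..<n]))"
    obtain w f where wf: "p = (w, f)" by fastforce
    then have "(w, f) \<in> topspace ?P" "L \<in> ult_eval B w (map f [0..<n])" using p by auto
    then obtain N where N: "openin ?P N" "(w, f) \<in> N"
      and in_N: "\<And>v g. (v, g) \<in> N \<Longrightarrow> L \<in> ult_eval B v (map g [0..<n])"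
      using ult_eval_open_nhd[OF assms \<open>L \<in> B\<close>] by blast
    have "N \<subseteq> {p \<in> topspace ?P. L \<in> (case p of (w, f) \<Rightarrow> ult_eval B w (map f [0..<n]))}"
    proof
      fix q assume "q \<in> N"
      then have "q \<in> topspace ?P" using openin_subset[OF N(1)] by blast
      moreover obtain v g where "q = (v, g)" by fastforce
      ultimately show "q \<in> {p \<in> topspace ?P. L \<in> (case p of (w, f) \<Rightarrow> ult_eval B w (map f [0..<n]))}"
        using in_N \<open>q \<in> N\<close> by simp
    qed
    then show "\<exists>T. openin ?P T \<and> p \<in> T \<and>
        T \<subseteq> {p \<in> topspace ?P. L \<in> (case p of (w, f) \<Rightarrow> ult_eval B w (map f [0..<n]))}"
      using N wf by blast
  qed
qed

lemma ult_eval_principal: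
  assumes "cond_star Om X B" "w \<in> topspace (Om (length ts))" "set ts \<subseteq> terms Om X"
  shows "ult_eval B w (map (\<lambda>t. {L \<in> B. t \<in> L}) ts) = {L \<in> B. App w ts \<in> L}"
proof (rule ultrafilter_of_subset_imp_eq)
  show "ultrafilter_of (terms Om X) B (ult_eval B w (map (\<lambda>t. {L \<in> B. t \<in> L}) ts))"
    using assms ultrafilter_of_principal[OF BA] by (intro ultrafilter_of_ult_eval) auto
  show "ultrafilter_of (terms Om X) B {L \<in> B. App w ts \<in> L}"
    using assms(2,3) by (intro ultrafilter_of_principal[OF BA] terms.app) auto
  show "ult_eval B w (map (\<lambda>t. {L \<in> B. t \<in> L}) ts) \<subseteq> {L \<in> B. App w ts \<in> L}"
  proof
    fix L assume "L \<in> ult_eval B w (map (\<lambda>t. {L \<in> B. t \<in> L}) ts)"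
    then obtain Ls where "L \<in> B" "\<forall>i<length ts. ts ! i \<in> Ls i"
      "\<And>ts'. length ts' = length ts \<Longrightarrow> \<forall>i<length ts. ts' ! i \<in> Ls i \<Longrightarrow> App w ts' \<in> L"
      by (elim mem_ult_evalE) auto
    then show "L \<in> {L \<in> B. App w ts \<in> L}" by blast
  qed
qed

lemma principal_in_gen_subalg:
  assumes "cond_star Om X B" "t \<in> terms Om X"
  shows "{L \<in> B. t \<in> L} \<in> gen_subalg Om (ult_eval B) ((\<lambda>x. {L \<in> B. Var x \<in> L}) ` topspace X)"
  using assms(2)
proof (induction t rule: terms.induct)
  case (var x)
  then show ?case by (blast intro: gen_subalg.base)
next
  case (app w ts)
  have "ult_eval B w (map (\<lambda>t. {L \<in> B. t \<in> L}) ts)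
      \<in> gen_subalg Om (ult_eval B) ((\<lambda>x. {L \<in> B. Var x \<in> L}) ` topspace X)"
    using app by (intro gen_subalg.op) auto
  moreover have "set ts \<subseteq> terms Om X" using app.IH by blast
  ultimately show ?case using ult_eval_principal[OF assms(1) app.hyps(1)] by simp
qed

lemma generating_map_principal:
  assumes "cond_star Om X B" and "\<forall>L\<in>B. openin X {x \<in> topspace X. Var x \<in> L}"
  shows "generating_map Om X (stone_dual (terms Om X) B) (ult_eval B) (\<lambda>x. {L \<in> B. Var x \<in> L})"
  unfolding generating_map_def
proof
  show "continuous_map X (stone_dual (terms Om X) B) (\<lambda>x. {L \<in> B. Var x \<in> L})"
    using assms(2) by (intro continuous_map_stone_dualI ultrafilter_of_principal[OF BA] terms.var) auto
  have principal_sub: "(\<lambda>t. {L \<in> B. t \<in> L}) ` terms Om X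
      \<subseteq> gen_subalg Om (ult_eval B) ((\<lambda>x. {L \<in> B. Var x \<in> L}) ` topspace X)"
    using principal_in_gen_subalg[OF assms(1)] by blast
  show "stone_dual (terms Om X) B closure_of
      gen_subalg Om (ult_eval B) ((\<lambda>x. {L \<in> B. Var x \<in> L}) ` topspace X) = topspace (stone_dual (terms Om X) B)"
  proof (rule subset_antisym[OF closure_of_subset_topspace])
    have "topspace (stone_dual (terms Om X) B)
        = stone_dual (terms Om X) B closure_of ((\<lambda>t. {L \<in> B. t \<in> L}) ` terms Om X)"
      using closure_of_principal_ultrafilters[OF BA] by simp
    also have "\<dots> \<subseteq> stone_dual (terms Om X) B closure_of
        gen_subalg Om (ult_eval B) ((\<lambda>x. {L \<in> B. Var x \<in> L}) ` topspace X)"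
      by (rule closure_of_mono[OF principal_sub])
    finally show "topspace (stone_dual (terms Om X) B) \<subseteq> stone_dual (terms Om X) B closure_of
        gen_subalg Om (ult_eval B) ((\<lambda>x. {L \<in> B. Var x \<in> L}) ` topspace X)" .
  qed
qed

end

theorem theorem5p5:
  fixes Om :: "nat \<Rightarrow> 'f topology" and X :: "'x topology" and B :: "('f,'x) otrm set set"
  assumes "boolean_subalgebra (terms Om X) B"
    and "cond_star Om X B"
  shows "(\<forall>n w Us. w \<in> topspace (Om n) \<and> length Us = n \<and> (\<forall>U\<in>set Us. ultrafilter_of (terms Om X) B U)
            \<longrightarrow> ultrafilter_of (terms Om X) B (ult_eval B w Us))
    \<and> stone_top_algebra Om (stone_dual (terms Om X) B) (ult_eval B)
    \<and> ((\<forall>L\<in>B. openin X {x \<in> topspace X. Var x \<in> L}) \<longrightarrow>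
         generating_map Om X (stone_dual (terms Om X) B) (ult_eval B) (\<lambda>x. {L \<in> B. Var x \<in> L}))"
proof (intro conjI allI impI)
  fix n w Us
  assume "w \<in> topspace (Om n) \<and> length Us = n \<and> (\<forall>U\<in>set Us. ultrafilter_of (terms Om X) B U)"
  then show "ultrafilter_of (terms Om X) B (ult_eval B w Us)"
    using ultrafilter_of_ult_eval[OF assms(1) _ _ _ assms(2)] by blast
next
  show "stone_top_algebra Om (stone_dual (terms Om X) B) (ult_eval B)"
    unfolding stone_top_algebra_def
    using compact_space_stone_dual[OF assms(1)] Hausdorff_stone_dual[OF assms(1)]
      stone_dual_dim_le_0[OF assms(1)] continuous_map_ult_eval[OF assms] by blast
next
  assume "\<forall>L\<in>B. openin X {x \<in> topspace X. Var x \<in> L}"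
  then show "generating_map Om X (stone_dual (terms Om X) B) (ult_eval B) (\<lambda>x. {L \<in> B. Var x \<in> L})"
    using generating_map_principal[OF assms] by blast
qed

end
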